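(* Let $k\ge 4$ and let $C$ be a binary Solomon–Stiffler code with parameters $(k,s;u_1,\dots,u_p)$ (as defined in the context). Then the following three statements are equivalent: (1) $u_p\ge 3$ (this condition being vacuous when $p=0$); (2) $C$ is self-orthogonal; (3) $C$ is doubly-even.
   Context: Let $S_k$ be the $k\times(2^k-1)$ binary matrix whose columns are all nonzero vectors of $\mathbb{F}_2^k$, and for an integer $s\ge1$ let $sS_k$ denote $s$ copies of $S_k$ placed side by side. A binary Solomon–Stiffler code with parameters $(k,s;u_1,\dots,u_p)$, where $s\ge1$, $p\ge0$ and $k>u_1>u_2>\cdots>u_p\ge1$ are integers, is defined as follows: choose subspaces $V_1,\dots,V_p$ of $\mathbb{F}_2^k$ with $\dim V_i=u_i$ such that every nonzero vector of $\mathbb{F}_2^k$ lies in at most $s$ of the $V_i$; let $G'$ be the matrix whose columns are the nonzero vectors of $V_1,\dots,V_p$ (with multiplicity), viewed as a submatrix of $sS_k$; let $G$ be obtained from $sS_k$ by deleting the columns of $G'$. The code generated by $G$ is the Solomon–Stiffler code; it is a binary $[s(2^k-1)-\sum_{i=1}^p(2^{u_i}-1),\,k,\,s2^{k-1}-\sum_{i=1}^p2^{u_i-1}]$ code. A binary code is self-orthogonal if $C\subseteq C^\perp$, and doubly-even if all its codeword weights are divisible by $4$. *)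

theory Defs
  imports "HOL-Analysis.Cartesian_Space" "HOL-Library.Z2" "HOL-Library.Multiset"
begin

text \<open>Vectors of F_2^k are elements of type bit ^ 'k with k = CARD('k).
  A matrix with k rows is given by the list of its columns.\<close>

definition SS_cols :: "nat \<Rightarrow> (bit ^ 'k) multiset" where
  "SS_cols s = repeat_mset s (mset_set (UNIV - {0}))"

definition SS_removed :: "nat \<Rightarrow> (nat \<Rightarrow> (bit ^ 'k) set) \<Rightarrow> (bit ^ 'k) multiset" where
  "SS_removed p V = (\<Sum>i\<in>{1..p}. mset_set (V i - {0}))"

definition SS_data :: "nat \<Rightarrow> nat \<Rightarrow> (nat \<Rightarrow> nat) \<Rightarrow> (nat \<Rightarrow> (bit ^ 'k) set) \<Rightarrow> bool" where
  "SS_data s p u V \<longleftrightarrow> s \<ge> 1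
     \<and> (p \<ge> 1 \<longrightarrow> u 1 < CARD('k) \<and> u p \<ge> 1)
     \<and> (\<forall>i. 1 \<le> i \<and> i < p \<longrightarrow> u (Suc i) < u i)
     \<and> (\<forall>i\<in>{1..p}. vec.subspace (V i) \<and> vec.dim (V i) = u i)
     \<and> (\<forall>v::bit^'k. v \<noteq> 0 \<longrightarrow> card {i\<in>{1..p}. v \<in> V i} \<le> s)"

text \<open>A column list G of a Solomon--Stiffler generator matrix
  (any ordering of the columns of sS_k with the columns of G' removed).\<close>
definition SS_matrix :: "nat \<Rightarrow> nat \<Rightarrow> (nat \<Rightarrow> (bit ^ 'k) set) \<Rightarrow> (bit ^ 'k) list \<Rightarrow> bool" where
  "SS_matrix s p V G \<longleftrightarrow> mset G = SS_cols s - SS_removed p V"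

definition gen_code :: "(bit ^ 'k) list \<Rightarrow> bit list set" where
  "gen_code G = {map (\<lambda>c. \<Sum>i\<in>UNIV. x $ i * c $ i) G | x. True}"

definition dot :: "bit list \<Rightarrow> bit list \<Rightarrow> bit" where
  "dot a b = (\<Sum>j<length a. a ! j * b ! j)"

definition hweight :: "bit list \<Rightarrow> nat" where
  "hweight a = card {j. j < length a \<and> a ! j \<noteq> 0}"

definition self_orthogonal :: "bit list set \<Rightarrow> bool" where
  "self_orthogonal C \<longleftrightarrow> (\<forall>a\<in>C. \<forall>b\<in>C. dot a b = 0)"

definition doubly_even :: "bit list set \<Rightarrow> bool" where
  "doubly_even C \<longleftrightarrow> (\<forall>a\<in>C. 4 dvd hweight a)"

end

theory Submission
  imports Defs
begin

text \<open>
  For x \<noteq> 0, the codeword x G has a 1 at a column g iff <x, g> = 1. Exactly 2^(k-1) nonzero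
  vectors of F_2^k satisfy this, and a subspace V_i contains either none or 2^(u_i - 1) of them;
  call this number c_i(x). Hence wt(x G) = s 2^(k-1) - \<Sum>_i c_i(x), so all weights are
  divisible by 4 when every u_i \<ge> 3. A doubly-even binary linear code is self-orthogonal since
  wt(a + b) = wt a + wt b - 2 |supp a \<inter> supp b|. Conversely, if u_p \<le> 2 then, the u_i being
  strictly decreasing, 2^(u_p) divides every c_i with i < p, so
  wt(x G) \<equiv> 2^(u_p - 1) (mod 2^(u_p)) whenever x is not orthogonal to V_p. For u_p = 1 this is a
  codeword of odd weight; for u_p = 2, choosing x and y that separate two nonzero vectors of V_p
  gives three codewords x G, y G, (x + y) G of weight 2 mod 4, which forces (x G) \<cdot> (y G) = 1.
\<close>

lemma UNIV_bit: "UNIV = {0 :: bit, 1}"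
  by (auto intro: bit.exhaust)

instance bit :: finite
  by standard (simp add: UNIV_bit)

lemma bit_add_self [simp]: "a + a = (0 :: bit)"
  by (cases a) simp_all

lemma bit_mult_self [simp]: "a * a = (a :: bit)"
  by (cases a) simp_all

lemma of_bool_eq_1_bit [simp]: "of_bool (a = 1) = (a :: bit)"
  by (cases a) simp_all

lemma of_nat_eq_0_iff_even_bit: "(of_nat n :: bit) = 0 \<longleftrightarrow> even n"
  by (induction n) auto

text \<open>Keep + and * on bit as ring operations instead of rewriting them to xor and and.\<close>
declare mult_bit_eq_and [simp del] add_bit_eq_xor [simp del]

lemma vec_add_self_bit [simp]: "v + v = (0 :: bit ^ 'n)"
  by (simp add: vec_eq_iff)

lemma vec_diff_eq_add_bit: "v - w = v + (w :: bit ^ 'n)"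
  by (simp add: vec_eq_iff)

lemma card_span_bit:
  fixes B :: "(bit ^ 'n) set"
  assumes "finite B" and "vec.independent B"
  shows "card (vec.span B) = 2 ^ card B"
  using assms
proof (induction B rule: finite_induct)
  case empty
  then show ?case by simp
next
  case (insert b B)
  let ?S = "vec.span B" and ?shift = "\<lambda>x. x + b"
  have indep: "vec.independent B" and b_notin: "b \<notin> ?S"
    using insert by (auto simp: vec.independent_insert)
  have shift_iff: "x \<in> ?shift ` ?S \<longleftrightarrow> x + b \<in> ?S" for x
    by (auto simp: image_iff add.assoc intro: bexI[of _ "x + b"])
  have "x \<in> vec.span (insert b B) \<longleftrightarrow> x \<in> ?S \<or> x + b \<in> ?S" for x
  proof -
    have "(\<exists>k. x - k *s b \<in> ?S) \<longleftrightarrow> x - 0 *s b \<in> ?S \<or> x - 1 *s b \<in> ?S"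
      by (metis bit.exhaust)
    then show ?thesis
      by (simp add: vec.span_insert vec_diff_eq_add_bit)
  qed
  then have "vec.span (insert b B) = ?S \<union> ?shift ` ?S"
    unfolding set_eq_iff Un_iff shift_iff by blast
  moreover have "?S \<inter> ?shift ` ?S = {}"
  proof -
    have "x + (x + b) = b" for x :: "bit ^ 'n"
      by (simp flip: add.assoc)
    then show ?thesis
      using b_notin vec.span_add[of _ B] unfolding shift_iff by fastforce
  qed
  moreover have "card (?shift ` ?S) = card ?S"
    by (rule card_image) (simp add: inj_on_def)
  ultimately show ?case
    using insert indep by (simp add: card_Un_disjoint)
qed

lemma card_subspace_bit:
  fixes W :: "(bit ^ 'n) set"
  assumes "vec.subspace W"
  shows "card W = 2 ^ vec.dim W"
proof -
  obtain B where "B \<subseteq> W" "vec.independent B" "W \<subseteq> vec.span B" "card B = vec.dim W"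
    using vec.basis_exists by blast
  moreover from this have "vec.span B = W"
    using assms vec.span_subspace by blast
  ultimately show ?thesis
    using card_span_bit[of B] by simp
qed

definition scalar_prod :: "bit ^ 'n \<Rightarrow> bit ^ 'n \<Rightarrow> bit" where
  "scalar_prod x g = (\<Sum>i\<in>UNIV. x $ i * g $ i)"

lemma scalar_prod_add_left: "scalar_prod (x + y) g = scalar_prod x g + scalar_prod y g"
  by (simp add: scalar_prod_def distrib_right sum.distrib)

lemma scalar_prod_add_right: "scalar_prod x (g + h) = scalar_prod x g + scalar_prod x h"
  by (simp add: scalar_prod_def distrib_left sum.distrib)

lemma scalar_prod_zero_left [simp]: "scalar_prod 0 g = 0"
  by (simp add: scalar_prod_def)

lemma scalar_prod_zero_right [simp]: "scalar_prod x 0 = 0"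
  by (simp add: scalar_prod_def)

lemma scalar_prod_commute: "scalar_prod x y = scalar_prod y x"
  by (simp add: scalar_prod_def mult.commute)

lemma scalar_prod_axis_right [simp]: "scalar_prod w (axis i 1) = w $ i"
  by (simp add: scalar_prod_def axis_def if_distrib cong: if_cong)

lemma scalar_prod_axis_left [simp]: "scalar_prod (axis i 1) w = w $ i"
  by (simp add: scalar_prod_commute)

lemma scalar_prod_separates:
  fixes w1 w2 :: "bit ^ 'n"
  assumes "w1 \<noteq> 0" and "w1 \<noteq> w2"
  obtains x where "scalar_prod x w1 = 1" and "scalar_prod x w2 = 0"
proof -
  obtain i where i: "w1 $ i = 1"
    using assms(1) by (auto simp: vec_eq_iff)
  obtain j where j: "w1 $ j \<noteq> w2 $ j"
    using assms(2) by (auto simp: vec_eq_iff)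
  consider "w2 $ i = 0" | "w1 $ j = 1" "w2 $ j = 0" | "w2 $ i = 1" "w1 $ j = 0" "w2 $ j = 1"
    using j by (metis bit_not_one_iff)
  then show thesis
  proof cases
    case 1
    then show thesis using i that[of "axis i 1"] by simp
  next
    case 2
    then show thesis using that[of "axis j 1"] by simp
  next
    case 3
    then show thesis using i that[of "axis i 1 + axis j 1"] by (simp add: scalar_prod_add_left)
  qed
qed

text \<open>Translation by w0 swaps the two fibres of scalar_prod x on W.\<close>
lemma card_subspace_scalar_prod_eq_1:
  fixes W :: "(bit ^ 'n) set"
  assumes W: "vec.subspace W" and w0: "w0 \<in> W" "scalar_prod x w0 = 1"
  shows "card {w\<in>W. scalar_prod x w = 1} = 2 ^ (vec.dim W - 1)"
proof -
  let ?W0 = "{w\<in>W. scalar_prod x w = 0}" and ?W1 = "{w\<in>W. scalar_prod x w = 1}"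
  have "bij_betw (\<lambda>w. w + w0) ?W0 ?W1"
  proof (rule bij_betw_byWitness[where f' = "\<lambda>w. w + w0"])
    show "(\<lambda>w. w + w0) ` ?W0 \<subseteq> ?W1" "(\<lambda>w. w + w0) ` ?W1 \<subseteq> ?W0"
      using W w0 by (auto simp: scalar_prod_add_right vec.subspace_add)
  qed (simp_all add: add.assoc)
  then have "card ?W0 = card ?W1"
    by (rule bij_betw_same_card)
  moreover have "card W = card ?W0 + card ?W1"
    by (subst card_Un_disjoint[symmetric]) (auto intro: arg_cong[where f = card])
  ultimately have "2 * card ?W1 = 2 ^ vec.dim W"
    using card_subspace_bit[OF W] by simp
  then show ?thesis
    by (cases "vec.dim W") simp_all
qed

lemma card_subspace_scalar_prod_eq_1_dvd:
  fixes W :: "(bit ^ 'n) set"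
  assumes "vec.subspace W"
  shows "2 ^ (vec.dim W - 1) dvd card {w\<in>W. scalar_prod x w = 1}"
proof (cases "\<exists>w\<in>W. scalar_prod x w = 1")
  case False
  then have "{w\<in>W. scalar_prod x w = 1} = {}"
    by blast
  then show ?thesis
    by (simp only: card.empty dvd_0_right)
qed (use card_subspace_scalar_prod_eq_1[OF assms] in auto)

lemma card_scalar_prod_eq_1:
  fixes x :: "bit ^ 'n"
  assumes "x \<noteq> 0"
  shows "card {g. scalar_prod x g = 1} = 2 ^ (CARD('n) - 1)"
proof -
  obtain i where "x $ i = 1"
    using assms by (auto simp: vec_eq_iff)
  then show ?thesis
    using card_subspace_scalar_prod_eq_1[OF vec.subspace_UNIV, of "axis i 1" x]
    by (simp add: card_cart_basis)
qed

lemma hweight_eq_sum: "hweight a = (\<Sum>j<length a. of_bool (a ! j = 1))"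
  unfolding hweight_def by (simp add: Int_def lessThan_def)

lemma dot_eq_of_nat_hweight:
  assumes "length a = length b"
  shows "dot a b = of_nat (hweight (map2 (*) a b))"
  using assms by (simp add: dot_def hweight_eq_sum of_nat_sum del: sum_of_bool_eq)

lemma dot_self_eq_0_iff: "dot a a = 0 \<longleftrightarrow> even (hweight a)"
  using dot_eq_of_nat_hweight[of a a] by (simp add: zip_same_conv_map comp_def of_nat_eq_0_iff_even_bit)

lemma hweight_map2_add:
  assumes "length a = length b"
  shows "hweight (map2 (+) a b) + 2 * hweight (map2 (*) a b) = hweight a + hweight b"
proof -
  have pointwise: "of_bool (x + y = 1) + 2 * of_bool (x * y = 1) = of_bool (x = 1) + (of_bool (y = 1) :: nat)"
    for x y :: bit
    by (cases x; cases y) simp_all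
  have "hweight (map2 (+) a b) + 2 * hweight (map2 (*) a b)
      = (\<Sum>j<length a. of_bool (a ! j + b ! j = 1) + 2 * of_bool (a ! j * b ! j = 1))"
    using assms by (simp add: hweight_eq_sum sum.distrib sum_distrib_left del: sum_of_bool_eq)
  also have "\<dots> = (\<Sum>j<length a. of_bool (a ! j = 1) + of_bool (b ! j = 1))"
    unfolding pointwise ..
  also have "\<dots> = hweight a + hweight b"
    using assms by (simp add: hweight_eq_sum sum.distrib del: sum_of_bool_eq)
  finally show ?thesis .
qed

lemma dot_eq_0_iff_hweight_add_mod_4:
  assumes "length a = length b"
  shows "dot a b = 0 \<longleftrightarrow> hweight (map2 (+) a b) mod 4 = (hweight a + hweight b) mod 4"
proof -
  have "even m \<longleftrightarrow> h mod 4 = (w1 + w2) mod 4" if "h + 2 * m = w1 + w2" for h m w1 w2 :: nat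
  proof -
    have "h mod 4 = (h + 2 * m) mod 4 \<longleftrightarrow> 2 * 2 dvd 2 * m"
      using mod_eq_dvd_iff_nat[of h "h + 2 * m" 4] by (simp add: eq_commute)
    then show ?thesis
      using that by simp
  qed
  then show ?thesis
    using hweight_map2_add[OF assms]
    unfolding dot_eq_of_nat_hweight[OF assms] of_nat_eq_0_iff_even_bit by blast
qed

definition binary_linear :: "bit list set \<Rightarrow> bool" where
  "binary_linear C \<longleftrightarrow> (\<exists>n. \<forall>a\<in>C. length a = n) \<and> (\<forall>a\<in>C. \<forall>b\<in>C. map2 (+) a b \<in> C)"

lemma doubly_even_imp_self_orthogonal:
  assumes "binary_linear C" and "doubly_even C"
  shows "self_orthogonal C"
  unfolding self_orthogonal_def
proof (intro ballI)
  fix a b assume "a \<in> C" "b \<in> C"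
  moreover from this have "length a = length b" and "map2 (+) a b \<in> C"
    using assms(1) unfolding binary_linear_def by metis+
  ultimately show "dot a b = 0"
    using assms(2) unfolding doubly_even_def dot_eq_0_iff_hweight_add_mod_4[OF \<open>length a = length b\<close>]
    by (simp add: mod_add_eq[symmetric] dvd_eq_mod_eq_0)
qed

lemma gen_code_eq_range: "gen_code G = range (\<lambda>x. map (scalar_prod x) G)"
  unfolding gen_code_def scalar_prod_def by auto

lemma map_scalar_prod_add:
  "map (scalar_prod (x + y)) G = map2 (+) (map (scalar_prod x) G) (map (scalar_prod y) G)"
  by (induction G) (simp_all add: scalar_prod_add_left)

lemma binary_linear_gen_code: "binary_linear (gen_code G)"
  unfolding binary_linear_def gen_code_eq_range by (auto simp flip: map_scalar_prod_add)

lemma size_filter_mset_sum: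
  "size (filter_mset P (\<Sum>i\<in>A. M i)) = (\<Sum>i\<in>A. size (filter_mset P (M i)))"
  by (induction A rule: infinite_finite_induct) simp_all

lemma filter_mset_repeat_mset: "filter_mset P (repeat_mset n M) = repeat_mset n (filter_mset P M)"
  by (rule multiset_eqI) simp

lemma SS_removed_subseteq_SS_cols:
  fixes V :: "nat \<Rightarrow> (bit ^ 'k) set"
  assumes "\<forall>v. v \<noteq> 0 \<longrightarrow> card {i\<in>{1..p}. v \<in> V i} \<le> s"
  shows "SS_removed p V \<subseteq># SS_cols s"
proof (rule mset_subset_eqI)
  fix v :: "bit ^ 'k"
  have "count (SS_removed p V) v = card {i\<in>{1..p}. v \<in> V i - {0}}"
    by (simp add: SS_removed_def count_sum count_mset_set' Int_def flip: of_bool_def)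
  then show "count (SS_removed p V) v \<le> count (SS_cols s) v"
    using assms by (cases "v = 0") (simp_all add: SS_cols_def)
qed

lemma SS_data_subspace:
  assumes "SS_data s p u V" and "i \<in> {1..p}"
  shows "vec.subspace (V i)" and "vec.dim (V i) = u i"
  using assms unfolding SS_data_def by auto

lemma SS_data_u_less:
  assumes "SS_data s p u V" and "1 \<le> i" and "i < j" and "j \<le> p"
  shows "u j < u i"
proof -
  have dec: "u (Suc n) < u n" if "1 \<le> n" and "n < p" for n
    using assms(1) that unfolding SS_data_def by blast
  from assms(3) have "Suc i \<le> j"
    by simp
  then show ?thesis
    using assms(4)
  proof (induction j rule: dec_induct)
    case base
    then show ?case using dec assms(2) by simp
  next
    case (step n)
    then show ?case using dec[of n] assms(2) by simp
  qed
qed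

lemma hweight_SS_codeword:
  fixes V :: "nat \<Rightarrow> (bit ^ 'k) set"
  assumes "SS_data s p u V" and "SS_matrix s p V G" and "x \<noteq> 0"
  shows "hweight (map (scalar_prod x) G) + (\<Sum>i\<in>{1..p}. card {w\<in>V i. scalar_prod x w = 1})
    = s * 2 ^ (CARD('k) - 1)"
proof -
  let ?P = "\<lambda>g. scalar_prod x g = 1"
  have drop_0: "{g\<in>A. g \<noteq> 0 \<and> ?P g} = {g\<in>A. ?P g}" for A
    by auto
  have "filter_mset ?P (SS_removed p V) \<subseteq># filter_mset ?P (SS_cols s)"
    using assms(1) unfolding SS_data_def
    by (intro filter_mset_mono_strong SS_removed_subseteq_SS_cols) simp_all
  moreover have "hweight (map (scalar_prod x) G) = size (filter_mset ?P (mset G))"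
    unfolding hweight_def size_mset mset_filter[symmetric] length_filter_conv_card
    by (auto intro: arg_cong[where f = card])
  ultimately have "hweight (map (scalar_prod x) G)
      = size (filter_mset ?P (SS_cols s)) - size (filter_mset ?P (SS_removed p V))"
    and "size (filter_mset ?P (SS_removed p V)) \<le> size (filter_mset ?P (SS_cols s))"
    using assms(2) unfolding SS_matrix_def by (simp_all add: size_mset_mono size_Diff_submset)
  moreover have "size (filter_mset ?P (SS_cols s)) = s * 2 ^ (CARD('k) - 1)"
    using card_scalar_prod_eq_1[OF assms(3)] drop_0[of UNIV]
    by (simp add: SS_cols_def filter_mset_repeat_mset)
  moreover have "size (filter_mset ?P (SS_removed p V)) = (\<Sum>i\<in>{1..p}. card {w\<in>V i. ?P w})"
    unfolding SS_removed_def size_filter_mset_sum by (simp add: drop_0)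
  ultimately show ?thesis
    by linarith
qed

lemma mod_double_eq_if_dvd_add:
  fixes a h :: nat
  assumes "2 * h dvd a + h" and "h > 0"
  shows "a mod (2 * h) = h"
proof -
  obtain k where k: "a + h = 2 * h * k"
    using assms(1) by (elim dvdE)
  with assms(2) have "a = h + (k - 1) * (2 * h)"
    by (cases k) (simp_all add: algebra_simps)
  then show ?thesis
    using assms(2) by simp
qed

lemma SS_hweight_mod:
  fixes V :: "nat \<Rightarrow> (bit ^ 'k) set"
  assumes data: "SS_data s p u V" and mat: "SS_matrix s p V G" and "p \<ge> 1"
    and w: "w \<in> V p" "scalar_prod x w = 1"
  shows "hweight (map (scalar_prod x) G) mod 2 ^ u p = 2 ^ (u p - 1)"
proof -
  let ?c = "\<lambda>i. card {w\<in>V i. scalar_prod x w = 1}"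
  have p: "p \<in> {1..p}"
    using \<open>p \<ge> 1\<close> by simp
  have "u p \<le> u 1"
    using SS_data_u_less[OF data, of 1 p] \<open>p \<ge> 1\<close> by (cases "p = 1") auto
  then have up: "1 \<le> u p" "u p \<le> CARD('k) - 1"
    using data \<open>p \<ge> 1\<close> unfolding SS_data_def by auto
  have "?c p = 2 ^ (u p - 1)"
    using card_subspace_scalar_prod_eq_1[OF SS_data_subspace(1)[OF data p] w]
      SS_data_subspace(2)[OF data p] by simp
  moreover have "(\<Sum>i\<in>{1..p}. ?c i) = ?c p + (\<Sum>i\<in>{1..<p}. ?c i)"
    using \<open>p \<ge> 1\<close> by (rule sum.last_plus)
  moreover have "x \<noteq> 0"
    using w by auto
  ultimately have weight: "(\<Sum>i\<in>{1..<p}. ?c i) + (hweight (map (scalar_prod x) G) + 2 ^ (u p - 1))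
      = s * 2 ^ (CARD('k) - 1)"
    using hweight_SS_codeword[OF data mat, of x] by linarith
  have rest: "2 ^ u p dvd (\<Sum>i\<in>{1..<p}. ?c i)"
  proof (rule dvd_sum)
    fix i assume "i \<in> {1..<p}"
    then have sub: "vec.subspace (V i)" and le: "u p \<le> vec.dim (V i) - 1"
      using SS_data_subspace[OF data] SS_data_u_less[OF data, of i p] by auto
    from le have "2 ^ u p dvd (2::nat) ^ (vec.dim (V i) - 1)"
      by (rule le_imp_power_dvd)
    then show "2 ^ u p dvd ?c i"
      using card_subspace_scalar_prod_eq_1_dvd[OF sub] by (rule dvd_trans)
  qed
  have "2 ^ u p dvd s * 2 ^ (CARD('k) - 1)"
    using up(2) by (simp add: le_imp_power_dvd)
  then have "2 ^ u p dvd hweight (map (scalar_prod x) G) + 2 ^ (u p - 1)"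
    unfolding weight[symmetric] dvd_add_right_iff[OF rest] .
  moreover have "(2::nat) ^ u p = 2 * 2 ^ (u p - 1)"
    using up(1) by (cases "u p") simp_all
  ultimately show ?thesis
    by (simp add: mod_double_eq_if_dvd_add)
qed

lemma SS_doubly_even:
  fixes V :: "nat \<Rightarrow> (bit ^ 'k) set"
  assumes "CARD('k) \<ge> 3" and data: "SS_data s p u V" and mat: "SS_matrix s p V G"
    and "p = 0 \<or> u p \<ge> 3"
  shows "doubly_even (gen_code G)"
proof -
  have "4 dvd hweight (map (scalar_prod x) G)" for x
  proof (cases "x = 0")
    case True
    then show ?thesis by (simp add: hweight_def cong: conj_cong)
  next
    case False
    have "4 dvd card {w\<in>V i. scalar_prod x w = 1}" if i: "i \<in> {1..p}" for i
    proof -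
      have "u p \<le> u i"
        using SS_data_u_less[OF data, of i p] i by (cases "i = p") auto
      then have "(4::nat) dvd 2 ^ (u i - 1)"
        using assms(4) i le_imp_power_dvd[of 2 "u i - 1" "2::nat"] by auto
      then show ?thesis
        using card_subspace_scalar_prod_eq_1_dvd[of "V i" x] SS_data_subspace[OF data i]
        by (metis dvd_trans)
    qed
    then have rest: "4 dvd (\<Sum>i\<in>{1..p}. card {w\<in>V i. scalar_prod x w = 1})"
      by (rule dvd_sum)
    have "(4::nat) dvd s * 2 ^ (CARD('k) - 1)"
      using assms(1) le_imp_power_dvd[of 2 "CARD('k) - 1" "2::nat"] by auto
    then show ?thesis
      unfolding hweight_SS_codeword[OF data mat False, symmetric] dvd_add_left_iff[OF rest] .
  qed
  then show ?thesis
    unfolding doubly_even_def gen_code_eq_range by auto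
qed

lemma SS_self_orthogonal_imp_u_ge_3:
  fixes V :: "nat \<Rightarrow> (bit ^ 'k) set"
  assumes data: "SS_data s p u V" and mat: "SS_matrix s p V G"
    and so: "self_orthogonal (gen_code G)"
  shows "p = 0 \<or> u p \<ge> 3"
proof (rule ccontr)
  let ?cw = "\<lambda>x. map (scalar_prod x) G"
  assume "\<not> (p = 0 \<or> u p \<ge> 3)"
  then have p: "p \<ge> 1" and "u p \<le> 2"
    by auto
  obtain B where B: "B \<subseteq> V p" "vec.independent B" "card B = u p"
    using vec.basis_exists SS_data_subspace(2)[OF data] p by (metis atLeastAtMost_iff order_refl)
  then have "0 \<notin> B"
    using vec.dependent_zero by blast
  have mod_hit: "hweight (?cw x) mod 2 ^ u p = 2 ^ (u p - 1)"
    if "w \<in> B" and "scalar_prod x w = 1" for x w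
    using SS_hweight_mod[OF data mat p] B(1) that by blast
  have dot_0: "dot (?cw x) (?cw y) = 0" for x y
    using so unfolding self_orthogonal_def gen_code_eq_range by blast
  have "u p \<ge> 1"
    using data p unfolding SS_data_def by blast
  with \<open>u p \<le> 2\<close> consider "u p = 1" | "u p = 2"
    by linarith
  then show False
  proof cases
    case 1
    then obtain w where "B = {w}"
      using B(3) card_1_singletonE by metis
    then obtain x where "scalar_prod x w = 1"
      using \<open>0 \<notin> B\<close> scalar_prod_separates[of w 0] by auto
    then have "odd (hweight (?cw x))"
      using mod_hit[of w x] 1 \<open>B = {w}\<close> by (simp add: odd_iff_mod_2_eq_one)
    then show False
      using dot_0[of x x] dot_self_eq_0_iff by blast
  next
    case 2
    then obtain w1 w2 where B12: "B = {w1, w2}" "w1 \<noteq> w2"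
      using B(3) card_2_iff by metis
    then obtain x y where x: "scalar_prod x w1 = 1" "scalar_prod x w2 = 0"
      and y: "scalar_prod y w2 = 1" "scalar_prod y w1 = 0"
      using \<open>0 \<notin> B\<close> scalar_prod_separates by (metis insert_iff)
    have "scalar_prod (x + y) w1 = 1"
      using x y by (simp add: scalar_prod_add_left)
    then have "hweight (?cw z) mod 4 = 2" if "z \<in> {x, y, x + y}" for z
      using that mod_hit[of w1] mod_hit[of w2] x y 2 B12 by auto
    then have "dot (?cw x) (?cw y) \<noteq> 0"
      by (simp add: dot_eq_0_iff_hweight_add_mod_4 mod_add_eq[symmetric] flip: map_scalar_prod_add)
    then show False
      using dot_0 by blast
  qed
qed

theorem theorem4p3:
  fixes s p :: nat and u :: "nat \<Rightarrow> nat" and V :: "nat \<Rightarrow> (bit ^ 'k) set"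
    and G :: "(bit ^ 'k) list"
  assumes "CARD('k) \<ge> 4"
    and "SS_data s p u V"
    and "SS_matrix s p V G"
  shows "((p = 0 \<or> u p \<ge> 3) \<longleftrightarrow> self_orthogonal (gen_code G))
       \<and> (self_orthogonal (gen_code G) \<longleftrightarrow> doubly_even (gen_code G))"
proof -
  have "p = 0 \<or> u p \<ge> 3 \<Longrightarrow> doubly_even (gen_code G)"
    using SS_doubly_even[OF _ assms(2,3)] assms(1) by simp
  moreover have "doubly_even (gen_code G) \<Longrightarrow> self_orthogonal (gen_code G)"
    using doubly_even_imp_self_orthogonal binary_linear_gen_code by blast
  moreover have "self_orthogonal (gen_code G) \<Longrightarrow> p = 0 \<or> u p \<ge> 3"
    using SS_self_orthogonal_imp_u_ge_3[OF assms(2,3)] by blast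
  ultimately show ?thesis
    by blast
qed

end
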